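(* Let $S_3^n=S_{K_3}^n$. Then $\chi_i'(S_3^1)=3$, $\chi_i'(S_3^2)=4$, and $\chi_i'(S_3^n)=5$ for every $n\ge 3$.
   Context: For a graph $H$ with at least one edge, an injective edge $k$-coloring is a map $c:E(H)\to\{1,\dots,k\}$ such that whenever $e_1=xy$, $e_2=yz$, $e_3=zu$ are edges of $H$ with $x,y,z$ distinct and $u\notin\{y,z\}$ (the case $u=x$ being allowed), we have $c(e_1)\ne c(e_3)$. The injective chromatic index $\chi_i'(H)$ is the least $k$ for which such a coloring exists. For a graph $G$ and positive integer $n$, the generalized Sierpiński graph $S_G^n$ has vertex set $V(G)^n$, and $(u_1,\dots,u_n)$, $(v_1,\dots,v_n)$ are adjacent if and only if there is $d\in\{1,\dots,n\}$ with $u_i=v_i$ for $i<d$, $u_dv_d\in E(G)$, and $u_i=v_d$, $v_i=u_d$ for all $i>d$. $K_3$ is the triangle. *)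

theory Defs
  imports Main
begin

text \<open>Simple graphs are given by a symmetric irreflexive adjacency relation E;
  edges are the two-element sets {x,y} with E x y.\<close>

definition inj_edge_coloring :: "('a \<Rightarrow> 'a \<Rightarrow> bool) \<Rightarrow> nat \<Rightarrow> ('a set \<Rightarrow> nat) \<Rightarrow> bool" where
  "inj_edge_coloring E k c \<longleftrightarrow>
     (\<forall>x y. E x y \<longrightarrow> c {x, y} \<in> {1..k}) \<and>
     (\<forall>x y z u. E x y \<and> E y z \<and> E z u \<and> x \<noteq> y \<and> y \<noteq> z \<and> x \<noteq> z \<and> u \<noteq> y \<and> u \<noteq> z
        \<longrightarrow> c {x, y} \<noteq> c {z, u})"

definition inj_chromatic_index :: "('a \<Rightarrow> 'a \<Rightarrow> bool) \<Rightarrow> nat" where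
  "inj_chromatic_index E = (LEAST k. \<exists>c. inj_edge_coloring E k c)"

text \<open>Generalized Sierpinski graph S_G^n, vertices = words of length n over V (0-indexed).\<close>
definition sierpinski_adj :: "'a set \<Rightarrow> ('a \<Rightarrow> 'a \<Rightarrow> bool) \<Rightarrow> nat \<Rightarrow> 'a list \<Rightarrow> 'a list \<Rightarrow> bool" where
  "sierpinski_adj V E n u v \<longleftrightarrow>
     length u = n \<and> length v = n \<and> set u \<subseteq> V \<and> set v \<subseteq> V \<and>
     (\<exists>d<n. take d u = take d v \<and> E (u ! d) (v ! d) \<and>
        (\<forall>i. d < i \<and> i < n \<longrightarrow> u ! i = v ! d \<and> v ! i = u ! d))"

definition K3_adj :: "nat \<Rightarrow> nat \<Rightarrow> bool" where
  "K3_adj x y \<longleftrightarrow> x \<in> {0,1,2} \<and> y \<in> {0,1,2} \<and> x \<noteq> y"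

abbreviation S3 :: "nat \<Rightarrow> nat list \<Rightarrow> nat list \<Rightarrow> bool" where
  "S3 n \<equiv> sierpinski_adj {0,1,2} K3_adj n"

end

theory Submission
  imports Defs
begin

text \<open>
  For n = 1, 2 an exhaustive search over the colourings of the edge list of S_3^n
  suffices. For n >= 3 the graph S_3^3 embeds into S_3^n. Inside S_3^3, a copy of S_3^2 together
  with the bridge leaving it at an extreme vertex forces, in every injective 4-colouring, the bridge
  to repeat the colour of one of the two copy edges at that vertex (again found by exhaustive
  search). By the symmetry exchanging the labels 0 and 2 this happens at both ends of the bridge
  between the copies 0 and 2, so an edge at one end and an edge at the other end get the same
  colour; but these two edges are joined by the bridge and must get different colours.

  S_3^1 and S_3^2 are coloured explicitly. For n >= 2, the copy i w of S_3^n inside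
  S_3^(n+1) is coloured by a fixed permutation, depending on i, of the colours of S_3^n, and every
  bridge gets a fixed colour. The permutations preserve the colour sets of the edges at and next to
  each extreme vertex, and these sets are what separates edges that conflict through a bridge; this
  invariant carries the construction from n to n + 1.
\<close>

section \<open>Injective edge colourings\<close>

definition edge_graph :: "('a \<times> 'a) list \<Rightarrow> 'a \<Rightarrow> 'a \<Rightarrow> bool" where
  "edge_graph es x y \<longleftrightarrow> (x, y) \<in> set es \<or> (y, x) \<in> set es"

definition conflict_path :: "('a \<Rightarrow> 'a \<Rightarrow> bool) \<Rightarrow> 'a \<Rightarrow> 'a \<Rightarrow> 'a \<Rightarrow> 'a \<Rightarrow> bool" where
  "conflict_path E x y z u \<longleftrightarrow>
     E x y \<and> E y z \<and> E z u \<and> x \<noteq> y \<and> y \<noteq> z \<and> x \<noteq> z \<and> u \<noteq> y \<and> u \<noteq> z"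

definition conflict_free :: "('a \<Rightarrow> 'a \<Rightarrow> bool) \<Rightarrow> ('a \<Rightarrow> 'a \<Rightarrow> 'b) \<Rightarrow> bool" where
  "conflict_free E f \<longleftrightarrow> (\<forall>x y z u. conflict_path E x y z u \<longrightarrow> f x y \<noteq> f z u)"

lemma inj_edge_coloring_iff:
  "inj_edge_coloring E k c \<longleftrightarrow>
     (\<forall>x y. E x y \<longrightarrow> c {x, y} \<in> {1..k}) \<and> conflict_free E (\<lambda>x y. c {x, y})"
  unfolding inj_edge_coloring_def conflict_free_def conflict_path_def by blast

lemma inj_edge_coloring_conflict:
  "inj_edge_coloring E k c \<Longrightarrow> conflict_path E x y z u \<Longrightarrow> c {x, y} \<noteq> c {z, u}"
  unfolding inj_edge_coloring_iff conflict_free_def by blast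

lemma inj_edge_coloring_mono:
  "inj_edge_coloring E k c \<Longrightarrow> k \<le> l \<Longrightarrow> inj_edge_coloring E l c"
  unfolding inj_edge_coloring_def by fastforce

lemma inj_chromatic_index_eqI:
  assumes "inj_edge_coloring E k c" and "\<And>c. \<not> inj_edge_coloring E (k - 1) c"
  shows "inj_chromatic_index E = k"
  unfolding inj_chromatic_index_def
proof (rule Least_equality)
  show "\<exists>c. inj_edge_coloring E k c"
    using assms(1) by blast
  show "k \<le> l" if "\<exists>c. inj_edge_coloring E l c" for l
  proof (rule ccontr)
    assume "\<not> k \<le> l"
    then have "l \<le> k - 1"
      by simp
    with that assms(2) show False
      by (meson inj_edge_coloring_mono)
  qed
qed

lemma inj_edge_coloring_pullback:
  assumes "inj_edge_coloring E k c" and "inj f" and "\<And>x y. E' x y \<Longrightarrow> E (f x) (f y)"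
  shows "inj_edge_coloring E' k (\<lambda>e. c (f ` e))"
proof -
  have "conflict_path E (f x) (f y) (f z) (f u)" if "conflict_path E' x y z u" for x y z u
    using that assms(2,3) unfolding conflict_path_def by (metis injD)
  then show ?thesis
    using assms(1,3) unfolding inj_edge_coloring_iff conflict_free_def by simp
qed

definition edge_colouring :: "('a \<Rightarrow> 'a \<Rightarrow> nat) \<Rightarrow> 'a set \<Rightarrow> nat" where
  "edge_colouring f e = (SOME a. \<exists>x y. e = {x, y} \<and> a = f x y)"

lemma edge_colouring_doubleton:
  assumes "\<And>x y. f x y = f y x"
  shows "edge_colouring f {x, y} = f x y"
  unfolding edge_colouring_def
proof (rule some_equality)
  show "\<exists>x' y'. {x, y} = {x', y'} \<and> f x y = f x' y'"
    by blast
  show "a = f x y" if "\<exists>x' y'. {x, y} = {x', y'} \<and> a = f x' y'" for a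
    using that assms by (auto simp: doubleton_eq_iff)
qed

lemma inj_edge_coloring_edge_colouring:
  assumes "conflict_free E f" and "\<And>x y. E x y \<Longrightarrow> f x y \<in> {1..k}" and "\<And>x y. f x y = f y x"
  shows "inj_edge_coloring E k (edge_colouring f)"
  using assms unfolding inj_edge_coloring_iff edge_colouring_doubleton[OF assms(3)] by simp

section \<open>Exhaustive search over the colourings of an edge list\<close>

fun edges_conflict :: "('a \<Rightarrow> 'a \<Rightarrow> bool) \<Rightarrow> 'a \<times> 'a \<Rightarrow> 'a \<times> 'a \<Rightarrow> bool" where
  "edges_conflict E (x, y) (z, u) \<longleftrightarrow>
     conflict_path E x y z u \<or> conflict_path E y x z u \<or>
     conflict_path E x y u z \<or> conflict_path E y x u z"

fun colourings :: "('e \<Rightarrow> 'e \<Rightarrow> bool) \<Rightarrow> nat \<Rightarrow> 'e list \<Rightarrow> nat list list" where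
  "colourings cf k [] = [[]]"
| "colourings cf k (e # es) =
     [a # p. p \<leftarrow> colourings cf k es, a \<leftarrow> [1..<Suc k],
             \<forall>(b, conflicting) \<in> set (zip p (map (cf e) es)). conflicting \<longrightarrow> a \<noteq> b]"

lemma mem_colourings_Cons:
  "a # p \<in> set (colourings cf k (e # es)) \<longleftrightarrow>
     p \<in> set (colourings cf k es) \<and> a \<in> {1..k} \<and>
     (\<forall>(b, conflicting) \<in> set (zip p (map (cf e) es)). conflicting \<longrightarrow> a \<noteq> b)"
  by auto

lemma colourings_complete:
  assumes "\<forall>e \<in> set es. col e \<in> {1..k}"
    and "\<forall>e \<in> set es. \<forall>e' \<in> set es. cf e e' \<longrightarrow> col e \<noteq> col e'"
  shows "map col es \<in> set (colourings cf k es)"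
  using assms
proof (induction es)
  case (Cons e es)
  have "\<forall>(b, conflicting) \<in> set (zip (map col es) (map (cf e) es)). conflicting \<longrightarrow> col e \<noteq> b"
    using Cons.prems(2) by (auto simp: zip_map_map zip_same_conv_map)
  then show ?case
    using Cons by (simp only: list.map mem_colourings_Cons) simp
qed simp

lemma colours_differ_if_edges_conflict:
  assumes "inj_edge_coloring E k c" and "\<And>x y. edge_graph es x y \<Longrightarrow> E x y"
    and "edges_conflict (edge_graph es) (x, y) (z, u)"
  shows "c {x, y} \<noteq> c {z, u}"
proof -
  have differ: "c {a, b} \<noteq> c {a', b'}" if "conflict_path (edge_graph es) a b a' b'" for a b a' b'
    using that assms(2) inj_edge_coloring_conflict[OF assms(1), of a b a' b']
    unfolding conflict_path_def by blast
  from assms(3) show ?thesis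
    using differ[of x y z u] differ[of y x z u] differ[of x y u z] differ[of y x u z]
    by (auto simp: insert_commute)
qed

lemma inj_edge_coloring_in_colourings:
  assumes "inj_edge_coloring E k c" and "\<And>x y. edge_graph es x y \<Longrightarrow> E x y"
  shows "map (\<lambda>(x, y). c {x, y}) es \<in> set (colourings (edges_conflict (edge_graph es)) k es)"
proof (rule colourings_complete)
  show "\<forall>e \<in> set es. (\<lambda>(x, y). c {x, y}) e \<in> {1..k}"
    using assms unfolding inj_edge_coloring_def edge_graph_def by auto
  show "\<forall>e \<in> set es. \<forall>e' \<in> set es. edges_conflict (edge_graph es) e e' \<longrightarrow>
      (\<lambda>(x, y). c {x, y}) e \<noteq> (\<lambda>(x, y). c {x, y}) e'"
    using colours_differ_if_edges_conflict[OF assms] by fast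
qed

lemma conflict_free_edge_graphI:
  assumes "\<forall>e \<in> set es. \<forall>e' \<in> set es. edges_conflict (edge_graph es) e e' \<longrightarrow> case_prod f e \<noteq> case_prod f e'"
    and "\<And>x y. f x y = f y x"
  shows "conflict_free (edge_graph es) f"
  unfolding conflict_free_def
proof (intro allI impI)
  fix x y z u
  assume path: "conflict_path (edge_graph es) x y z u"
  then have "((x, y) \<in> set es \<or> (y, x) \<in> set es) \<and> ((z, u) \<in> set es \<or> (u, z) \<in> set es)"
    unfolding conflict_path_def edge_graph_def by blast
  then show "f x y \<noteq> f z u"
    using assms path by (elim conjE disjE) (fastforce simp: conflict_path_def)+
qed

lemma not_inj_edge_coloring_if_no_colourings:
  assumes "colourings (edges_conflict (edge_graph es)) k es = []"
    and "\<And>x y. edge_graph es x y \<Longrightarrow> E x y"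
  shows "\<not> inj_edge_coloring E k c"
  using inj_edge_coloring_in_colourings[OF _ assms(2)] assms(1) by force

section \<open>Sierpinski graphs of the triangle\<close>

lemma sierpinski_adj_length:
  "sierpinski_adj V E n u v \<Longrightarrow> length u = n \<and> length v = n"
  by (simp add: sierpinski_adj_def)

lemma not_sierpinski_adj_0: "\<not> sierpinski_adj V E 0 u v"
  by (simp add: sierpinski_adj_def)

lemma all_less_Suc_shift:
  "(\<forall>k. d < k \<and> k < Suc n \<longrightarrow> Q k) \<longleftrightarrow> (\<forall>k. d \<le> k \<and> k < n \<longrightarrow> Q (Suc k))"
proof (intro iffI allI impI)
  fix k
  assume "\<forall>k. d < k \<and> k < Suc n \<longrightarrow> Q k" and "d \<le> k \<and> k < n"
  then show "Q (Suc k)"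
    by simp
next
  fix k
  assume shifted: "\<forall>k. d \<le> k \<and> k < n \<longrightarrow> Q (Suc k)" and "d < k \<and> k < Suc n"
  then obtain k' where "k = Suc k'" "d \<le> k'" "k' < n"
    by (cases k) auto
  with shifted show "Q k"
    by simp
qed

lemma replicate_iff_nth: "length u = n \<Longrightarrow> u = replicate n a \<longleftrightarrow> (\<forall>i<n. u ! i = a)"
  by (metis in_set_conv_nth replicate_eqI nth_replicate)

lemma sierpinski_adj_Cons:
  "sierpinski_adj V E (Suc n) (i # u) (j # v) \<longleftrightarrow>
     i \<in> V \<and> j \<in> V \<and>
     (i = j \<and> sierpinski_adj V E n u v \<or> E i j \<and> u = replicate n j \<and> v = replicate n i)"
  unfolding sierpinski_adj_def Ex_less_Suc2 all_less_Suc_shift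
  by (auto simp: replicate_iff_nth Suc_le_eq)

lemma sierpinski_adj_replicate_append:
  "a \<in> V \<Longrightarrow> sierpinski_adj V E m u v \<Longrightarrow>
     sierpinski_adj V E (p + m) (replicate p a @ u) (replicate p a @ v)"
  by (induction p) (auto simp: sierpinski_adj_Cons)

lemma sierpinski_adj_map:
  assumes "sierpinski_adj V E n u v" and "\<And>x y. E x y \<Longrightarrow> E' (\<sigma> x) (\<sigma> y)"
  shows "sierpinski_adj (\<sigma> ` V) E' n (map \<sigma> u) (map \<sigma> v)"
  using assms unfolding sierpinski_adj_def by (auto simp: take_map)

lemma S3_sym: "S3 n x y \<Longrightarrow> S3 n y x"
  unfolding sierpinski_adj_def K3_adj_def by (metis (no_types, lifting))

lemma S3_irrefl: "\<not> S3 n x x"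
  by (auto simp: sierpinski_adj_def K3_adj_def)

lemma S3_SucE:
  assumes "S3 (Suc n) x y"
  obtains (copy) i u v where "x = i # u" "y = i # v" "i \<in> {0, 1, 2}" "S3 n u v"
  | (bridge) i j where "K3_adj i j" "x = i # replicate n j" "y = j # replicate n i"
proof -
  obtain i u j v where xy: "x = i # u" "y = j # v"
    using sierpinski_adj_length[OF assms] by (metis length_Suc_conv)
  show ?thesis
    using assms that unfolding xy by (auto simp: sierpinski_adj_Cons K3_adj_def)
qed

lemma not_S3_replicate_replicate:
  assumes "2 \<le> n"
  shows "\<not> S3 n (replicate n j) (replicate n k)"
proof
  assume edge: "S3 n (replicate n j) (replicate n k)"
  obtain m where n: "n = Suc (Suc m)"
    using assms by (metis add_2_eq_Suc le_Suc_ex)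
  from edge show False
    unfolding n using S3_irrefl[of m] by (auto simp: sierpinski_adj_Cons K3_adj_def)
qed

lemma S3_Suc_replicateE:
  assumes "S3 (Suc n) (replicate (Suc n) j) v" and "1 \<le> n"
  obtains v' where "v = j # v'" "j \<in> {0, 1, 2}" "S3 n (replicate n j) v'"
  using assms(1)
proof (cases rule: S3_SucE)
  case (bridge i k)
  then show ?thesis
    using assms(2) by (auto simp: K3_adj_def)
qed (use that in auto)

lemma S3_Suc_edge_at_bridge_end:
  assumes "S3 (Suc n) x (i # replicate n l)" and "x \<noteq> l # replicate n i" and "1 \<le> n"
  shows "\<exists>x'. x = i # x' \<and> S3 n x' (replicate n l)"
  using assms(1)
proof (cases rule: S3_SucE)
  case (bridge k l')
  then show ?thesis
    using assms(2,3) by (auto simp: K3_adj_def)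
qed auto

lemma conflict_path_S3_SucE [consumes 2]:
  assumes path: "conflict_path (S3 (Suc n)) x y z u" and n: "2 \<le> n"
  obtains (copy) i x' y' z' u' where "x = i # x'" "y = i # y'" "z = i # z'" "u = i # u'"
      "i \<in> {0, 1, 2}" "conflict_path (S3 n) x' y' z' u'"
  | (into_bridge) i l x' y' where "x = i # x'" "y = i # y'" "z = i # replicate n l" "u = l # replicate n i"
      "K3_adj i l" "S3 n x' y'" "S3 n y' (replicate n l)" "x' \<noteq> replicate n l"
  | (out_of_bridge) i l z' u' where "u = i # u'" "z = i # z'" "y = i # replicate n l" "x = l # replicate n i"
      "K3_adj i l" "S3 n u' z'" "S3 n z' (replicate n l)" "u' \<noteq> replicate n l"
  | (across_bridge) i l x' u' where "x = i # x'" "y = i # replicate n l" "z = l # replicate n i" "u = l # u'"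
      "K3_adj i l" "S3 n x' (replicate n l)" "S3 n (replicate n i) u'"
proof -
  from path have xy: "S3 (Suc n) x y" and yz: "S3 (Suc n) y z" and zu: "S3 (Suc n) z u"
    and ne: "x \<noteq> y" "y \<noteq> z" "x \<noteq> z" "u \<noteq> y" "u \<noteq> z"
    unfolding conflict_path_def by auto
  have no_bridge_pair: "\<not> S3 n (replicate n j) (replicate n k)" for j k
    using n by (rule not_S3_replicate_replicate)
  have K3_sym: "K3_adj i l \<Longrightarrow> K3_adj l i" for i l
    by (auto simp: K3_adj_def)
  from yz show thesis
  proof (cases rule: S3_SucE)
    case (copy i y' z')
    from xy show thesis
    proof (cases rule: S3_SucE)
      case xy_copy: (copy i' x' y'')
      then have x: "x = i # x'" "S3 n x' y'"
        using copy by auto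
      from zu show thesis
      proof (cases rule: S3_SucE)
        case zu_copy: (copy i'' z'' u')
        then have "u = i # u'" "S3 n z' u'"
          using copy by auto
        with x copy ne show thesis
          by (intro that(1)[of i x' y' z' u']) (auto simp: conflict_path_def)
      next
        case zu_bridge: (bridge k l)
        then have "z = i # replicate n l" "u = l # replicate n i" "K3_adj i l"
          using copy by auto
        with x copy ne show thesis
          by (intro that(2)[of i x' y' l]) auto
      qed
    next
      case xy_bridge: (bridge k l)
      then have x: "x = k # replicate n i" "y' = replicate n k" "K3_adj i k"
        using copy K3_sym by auto
      from zu show thesis
      proof (cases rule: S3_SucE)
        case zu_copy: (copy i'' z'' u')
        then have "u = i # u'" "S3 n u' z'"
          using copy S3_sym by auto
        with x copy ne S3_sym show thesis
          by (intro that(3)[of i u' z' k]) auto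
      next
        case zu_bridge: (bridge k' l')
        then show thesis
          using copy x no_bridge_pair by auto
      qed
    qed
  next
    case (bridge i l)
    have "\<exists>x'. x = i # x' \<and> S3 n x' (replicate n l)"
      using xy ne bridge n by (intro S3_Suc_edge_at_bridge_end) auto
    moreover have "\<exists>u'. u = l # u' \<and> S3 n u' (replicate n i)"
      using zu ne bridge n S3_sym by (intro S3_Suc_edge_at_bridge_end) auto
    ultimately show thesis
      using that(4) bridge S3_sym by blast
  qed
qed

definition S3_1_edges :: "(nat list \<times> nat list) list" where
  "S3_1_edges = [([0], [1]), ([0], [2]), ([1], [2])]"

definition S3_2_edges :: "(nat list \<times> nat list) list" where
  "S3_2_edges =
     [([0,0], [0,1]), ([0,0], [0,2]), ([0,1], [0,2]), ([1,0], [1,1]), ([1,0], [1,2]), ([1,1], [1,2]),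
      ([2,0], [2,1]), ([2,0], [2,2]), ([2,1], [2,2]), ([0,1], [1,0]), ([0,2], [2,0]), ([1,2], [2,1])]"

lemma S3_1_eq: "S3 1 = edge_graph S3_1_edges"
proof (intro ext iffI)
  fix x y
  assume edge: "S3 1 x y"
  then obtain a b where "x = [a]" "y = [b]"
    using sierpinski_adj_length by (metis One_nat_def length_0_conv length_Suc_conv)
  with edge show "edge_graph S3_1_edges x y"
    by (auto simp: sierpinski_adj_Cons not_sierpinski_adj_0 K3_adj_def S3_1_edges_def edge_graph_def)
qed (auto simp: sierpinski_adj_Cons not_sierpinski_adj_0 K3_adj_def S3_1_edges_def edge_graph_def)

lemma S3_2_eq: "S3 2 = edge_graph S3_2_edges"
proof (intro ext iffI)
  fix x y
  assume edge: "S3 2 x y"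
  then obtain a b c d where xy: "x = [a, b]" "y = [c, d]"
    using sierpinski_adj_length
    by (metis (no_types, lifting) One_nat_def Suc_1 length_0_conv length_Suc_conv)
  have "a \<in> {0, 1, 2} \<and> (a = c \<and> S3 1 [b] [d] \<or> K3_adj a c \<and> b = c \<and> d = a)"
    using edge unfolding xy Suc_1[symmetric] sierpinski_adj_Cons by auto
  then consider
      "a \<in> {0, 1, 2}" "a = c" "(b, d) \<in> {(0, 1), (0, 2), (1, 2), (1, 0), (2, 0), (2, 1)}"
    | "K3_adj a c" "b = c" "d = a"
    unfolding S3_1_eq by (auto simp: edge_graph_def S3_1_edges_def)
  then show "edge_graph S3_2_edges x y"
    unfolding xy K3_adj_def
    by cases (elim conjE insertE; simp add: edge_graph_def S3_2_edges_def)+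
qed (auto simp: numeral_2_eq_2 sierpinski_adj_Cons not_sierpinski_adj_0 K3_adj_def
    S3_2_edges_def edge_graph_def)

section \<open>Lower bounds\<close>

lemma not_inj_edge_coloring_S3_1: "\<not> inj_edge_coloring (S3 1) 2 c"
proof (rule not_inj_edge_coloring_if_no_colourings)
  show "colourings (edges_conflict (edge_graph S3_1_edges)) 2 S3_1_edges = []"
    by code_simp
qed (simp only: S3_1_eq)

lemma not_inj_edge_coloring_S3_2: "\<not> inj_edge_coloring (S3 2) 3 c"
proof (rule not_inj_edge_coloring_if_no_colourings)
  show "colourings (edges_conflict (edge_graph S3_2_edges)) 3 S3_2_edges = []"
    by code_simp
qed (simp only: S3_2_eq)

text \<open>
  Copy 0 of S_3^2 inside S_3^3 with the bridge to copy 2. The bridge is at position 0 and the two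
  copy edges at its end [0,2,2] are at positions 3 and 5; the order of the other edges only keeps
  the search small.
\<close>

definition copy_with_pendant :: "(nat list \<times> nat list) list" where
  "copy_with_pendant =
     [([0,2,2], [2,0,0]), ([0,1,2], [0,2,1]), ([0,0,2], [0,2,0]), ([0,2,0], [0,2,2]),
      ([0,0,1], [0,1,0]), ([0,2,1], [0,2,2]), ([0,0,0], [0,0,2]), ([0,1,0], [0,1,2]),
      ([0,0,1], [0,0,2]), ([0,1,1], [0,1,2]), ([0,0,0], [0,0,1]), ([0,1,0], [0,1,1]),
      ([0,2,0], [0,2,1])]"

lemma colourings_copy_with_pendant:
  "\<forall>p \<in> set (colourings (edges_conflict (edge_graph copy_with_pendant)) 4 copy_with_pendant).
     p ! 0 \<in> {p ! 3, p ! 5}"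
  by code_simp

lemma S3_3_copy_with_pendant: "edge_graph copy_with_pendant x y \<Longrightarrow> S3 3 x y"
  unfolding edge_graph_def copy_with_pendant_def
  by (auto simp: numeral_3_eq_3 sierpinski_adj_Cons not_sierpinski_adj_0 K3_adj_def)

lemma S3_3_pendant_colour:
  assumes "inj_edge_coloring (S3 3) 4 c"
  shows "c {[0,2,2], [2,0,0]} \<in> {c {[0,2,0], [0,2,2]}, c {[0,2,1], [0,2,2]}}"
proof -
  let ?p = "map (\<lambda>(x, y). c {x, y}) copy_with_pendant"
  have "?p \<in> set (colourings (edges_conflict (edge_graph copy_with_pendant)) 4 copy_with_pendant)"
    by (rule inj_edge_coloring_in_colourings[OF assms S3_3_copy_with_pendant])
  then have "?p ! 0 \<in> {?p ! 3, ?p ! 5}"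
    using colourings_copy_with_pendant by blast
  then show ?thesis
    by (simp add: copy_with_pendant_def)
qed

definition reflect :: "nat \<Rightarrow> nat" where
  "reflect = id(0 := 2, 2 := 0)"

lemma inj_reflect: "inj reflect"
  unfolding reflect_def inj_def by simp

lemma S3_map_reflect:
  assumes "S3 n u v"
  shows "S3 n (map reflect u) (map reflect v)"
proof -
  have "reflect ` {0, 1, 2} = {0, 1, 2}"
    by (auto simp: reflect_def)
  moreover have "K3_adj (reflect x) (reflect y)" if "K3_adj x y" for x y
    using that by (auto simp: K3_adj_def reflect_def)
  ultimately show ?thesis
    using sierpinski_adj_map[OF assms] by metis
qed

lemma not_inj_edge_coloring_S3_3: "\<not> inj_edge_coloring (S3 3) 4 c"
proof
  assume c: "inj_edge_coloring (S3 3) 4 c"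
  \<comment> \<open>reflect exchanges the copies 0 and 2 and fixes the bridge between them\<close>
  have "inj_edge_coloring (S3 3) 4 (\<lambda>e. c (map reflect ` e))"
    using c inj_mapI[OF inj_reflect] S3_map_reflect by (rule inj_edge_coloring_pullback)
  from S3_3_pendant_colour[OF this] have "c {[0,2,2], [2,0,0]} \<in> {c {[2,0,1], [2,0,0]}, c {[2,0,2], [2,0,0]}}"
    by (simp add: reflect_def insert_commute)
  moreover have "c {[0,2,2], [2,0,0]} \<in> {c {[0,2,0], [0,2,2]}, c {[0,2,1], [0,2,2]}}"
    using c by (rule S3_3_pendant_colour)
  moreover have "c {a, [0,2,2]} \<noteq> c {b, [2,0,0]}" if "a \<in> {[0,2,0], [0,2,1]}" "b \<in> {[2,0,1], [2,0,2]}" for a b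
  proof -
    have "conflict_path (S3 3) a [0,2,2] [2,0,0] b"
      using that by (auto simp: conflict_path_def numeral_3_eq_3 sierpinski_adj_Cons K3_adj_def)
    from inj_edge_coloring_conflict[OF c this] show ?thesis
      by (simp add: insert_commute)
  qed
  ultimately show False
    by auto
qed

lemma not_inj_edge_coloring_S3:
  assumes "3 \<le> n"
  shows "\<not> inj_edge_coloring (S3 n) 4 c"
proof
  assume "inj_edge_coloring (S3 n) 4 c"
  moreover have "inj (\<lambda>u. replicate (n - 3) 0 @ u)"
    by (simp add: inj_def)
  moreover have "S3 n (replicate (n - 3) 0 @ u) (replicate (n - 3) 0 @ v)" if "S3 3 u v" for u v
    using sierpinski_adj_replicate_append[OF _ that, of 0 "n - 3"] assms by simp
  ultimately have "inj_edge_coloring (S3 3) 4 (\<lambda>e. c ((\<lambda>u. replicate (n - 3) 0 @ u) ` e))"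
    by (rule inj_edge_coloring_pullback)
  then show False
    using not_inj_edge_coloring_S3_3 by blast
qed

section \<open>A colouring of S_3^n with five colours\<close>

definition level_two_perm :: "nat \<Rightarrow> nat \<Rightarrow> nat" where
  "level_two_perm i x = (if x \<in> {1..5} then [[1,2,3,4,5], [2,5,3,1,4], [1,5,2,3,4]] ! i ! (x - 1) else x)"

definition copy_perm :: "nat \<Rightarrow> nat \<Rightarrow> nat" where
  "copy_perm i x = (if x \<in> {1..5} then [[2,1,4,3,5], [5,3,2,1,4], [3,2,1,4,5]] ! i ! (x - 1) else x)"

definition bridge_colour :: "nat \<Rightarrow> nat \<Rightarrow> nat" where
  "bridge_colour i j = (if i + j = 1 then 4 else if i + j = 2 then 3 else 1)"

text \<open>
  The level-2 case is detected by length u + length v = 2 rather than length u = 1 so that the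
  colouring is symmetric without any hypothesis on the lengths.
\<close>

fun sierpinski_colouring :: "nat list \<Rightarrow> nat list \<Rightarrow> nat" where
  "sierpinski_colouring (i # u) (j # v) =
     (if i = j then
        (if length u + length v = 2 then level_two_perm i else copy_perm i) (sierpinski_colouring u v)
      else if u = [] \<and> v = [] then i + j
      else bridge_colour i j)"
| "sierpinski_colouring _ _ = 0"

definition extreme_edge_colours :: "nat \<Rightarrow> nat set" where
  "extreme_edge_colours j = [{1,2}, {2,3}, {2,5}] ! j"

definition second_edge_colours :: "nat \<Rightarrow> nat set" where
  "second_edge_colours j = [{3,4}, {1,4,5}, {1,3}] ! j"

lemma sierpinski_colouring_sym: "sierpinski_colouring x y = sierpinski_colouring y x"
  by (induction x y rule: sierpinski_colouring.induct) (auto simp: bridge_colour_def)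

lemma sierpinski_colouring_copy:
  "S3 n u v \<Longrightarrow> 2 \<le> n \<Longrightarrow> sierpinski_colouring (i # u) (i # v) = copy_perm i (sierpinski_colouring u v)"
  by (simp add: sierpinski_adj_length)

lemma sierpinski_colouring_bridge:
  "i \<noteq> j \<Longrightarrow> 1 \<le> n \<Longrightarrow>
     sierpinski_colouring (i # replicate n j) (j # replicate n i) = bridge_colour i j"
  by (cases n) auto

lemma copy_perm_range: "i \<in> {0, 1, 2} \<Longrightarrow> x \<in> {1..5} \<Longrightarrow> copy_perm i x \<in> {1..5}"
  by (auto simp: copy_perm_def nth_Cons split: nat.splits)

lemma copy_perm_inj:
  assumes "i \<in> {0, 1, 2}" "x \<in> {1..5}" "y \<in> {1..5}" "copy_perm i x = copy_perm i y"
  shows "x = y"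
proof -
  have "x \<in> {1, 2, 3, 4, 5}" "y \<in> {1, 2, 3, 4, 5}"
    using assms(2,3) by auto
  then show ?thesis
    using assms(1,4) by (auto simp: copy_perm_def)
qed

lemma copy_perm_extreme_edge_colours:
  "i \<in> {0, 1, 2} \<Longrightarrow> x \<in> extreme_edge_colours i \<Longrightarrow> copy_perm i x \<in> extreme_edge_colours i"
  by (auto simp: copy_perm_def extreme_edge_colours_def)

lemma copy_perm_second_edge_colours:
  "i \<in> {0, 1, 2} \<Longrightarrow> x \<in> second_edge_colours i \<Longrightarrow> copy_perm i x \<in> second_edge_colours i"
  by (auto simp: copy_perm_def second_edge_colours_def)

lemma copy_perm_extreme_edge_colours_disjoint:
  "K3_adj i j \<Longrightarrow> x \<in> extreme_edge_colours j \<Longrightarrow> y \<in> extreme_edge_colours i \<Longrightarrow>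
     copy_perm i x \<noteq> copy_perm j y"
  by (auto simp: K3_adj_def copy_perm_def extreme_edge_colours_def)

lemma copy_perm_second_edge_colour_ne_bridge_colour:
  "K3_adj i j \<Longrightarrow> x \<in> second_edge_colours j \<Longrightarrow> copy_perm i x \<noteq> bridge_colour i j"
  by (auto simp: K3_adj_def copy_perm_def second_edge_colours_def bridge_colour_def)

definition colouring_invariant :: "nat \<Rightarrow> bool" where
  "colouring_invariant n \<longleftrightarrow>
     conflict_free (S3 n) sierpinski_colouring \<and>
     (\<forall>x y. S3 n x y \<longrightarrow> sierpinski_colouring x y \<in> {1..5}) \<and>
     (\<forall>j v. S3 n (replicate n j) v \<longrightarrow> sierpinski_colouring (replicate n j) v \<in> extreme_edge_colours j) \<and>
     (\<forall>j v w. S3 n (replicate n j) v \<and> S3 n v w \<and> w \<noteq> replicate n j \<longrightarrow>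
        sierpinski_colouring v w \<in> second_edge_colours j)"

lemma colour_ne_into_bridge:
  assumes inv: "colouring_invariant n" and "2 \<le> n" and il: "K3_adj i l"
    and "S3 n x' y'" "S3 n y' (replicate n l)" "x' \<noteq> replicate n l"
  shows "sierpinski_colouring (i # x') (i # y') \<noteq> sierpinski_colouring (i # replicate n l) (l # replicate n i)"
proof -
  have "sierpinski_colouring y' x' \<in> second_edge_colours l"
    using inv assms(4-6) S3_sym unfolding colouring_invariant_def by blast
  then have "copy_perm i (sierpinski_colouring x' y') \<noteq> bridge_colour i l"
    using il by (simp add: sierpinski_colouring_sym copy_perm_second_edge_colour_ne_bridge_colour)
  moreover have "sierpinski_colouring (i # x') (i # y') = copy_perm i (sierpinski_colouring x' y')"
    using assms(4,2) by (rule sierpinski_colouring_copy)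
  moreover have "sierpinski_colouring (i # replicate n l) (l # replicate n i) = bridge_colour i l"
    using il assms(2) by (intro sierpinski_colouring_bridge) (auto simp: K3_adj_def)
  ultimately show ?thesis
    by simp
qed

lemma conflict_free_S3_Suc:
  assumes inv: "colouring_invariant n" and n: "2 \<le> n"
  shows "conflict_free (S3 (Suc n)) sierpinski_colouring"
  unfolding conflict_free_def
proof (intro allI impI)
  fix x y z u
  assume "conflict_path (S3 (Suc n)) x y z u"
  from this n show "sierpinski_colouring x y \<noteq> sierpinski_colouring z u"
  proof (cases rule: conflict_path_S3_SucE)
    case (copy i x' y' z' u')
    have xy: "S3 n x' y'" and zu: "S3 n z' u'"
      using copy(6) unfolding conflict_path_def by blast+
    have "sierpinski_colouring x' y' \<noteq> sierpinski_colouring z' u'"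
      using inv copy(6) unfolding colouring_invariant_def conflict_free_def by blast
    moreover have "sierpinski_colouring x' y' \<in> {1..5}" "sierpinski_colouring z' u' \<in> {1..5}"
      using inv xy zu unfolding colouring_invariant_def by blast+
    ultimately have "copy_perm i (sierpinski_colouring x' y') \<noteq> copy_perm i (sierpinski_colouring z' u')"
      using copy_perm_inj[OF copy(5)] by blast
    then show ?thesis
      unfolding copy(1-4) sierpinski_colouring_copy[OF xy n] sierpinski_colouring_copy[OF zu n] .
  next
    case (into_bridge i l x' y')
    then show ?thesis
      using colour_ne_into_bridge[OF inv n] by simp
  next
    case (out_of_bridge i l z' u')
    have "sierpinski_colouring (i # u') (i # z') \<noteq> sierpinski_colouring (i # replicate n l) (l # replicate n i)"
      using out_of_bridge(5-8) by (rule colour_ne_into_bridge[OF inv n])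
    then show ?thesis
      unfolding out_of_bridge(1-4) by (metis sierpinski_colouring_sym)
  next
    case (across_bridge i l x' u')
    have "sierpinski_colouring (replicate n l) x' \<in> extreme_edge_colours l"
      "sierpinski_colouring (replicate n i) u' \<in> extreme_edge_colours i"
      using inv across_bridge(6,7) S3_sym unfolding colouring_invariant_def by blast+
    then have "copy_perm i (sierpinski_colouring (replicate n l) x') \<noteq>
        copy_perm l (sierpinski_colouring (replicate n i) u')"
      by (rule copy_perm_extreme_edge_colours_disjoint[OF across_bridge(5)])
    then show ?thesis
      unfolding across_bridge(1-4) sierpinski_colouring_copy[OF across_bridge(6) n]
        sierpinski_colouring_copy[OF across_bridge(7) n]
      by (simp add: sierpinski_colouring_sym[of x'])
  qed
qed

lemma colouring_invariant_Suc:
  assumes inv: "colouring_invariant n" and n: "2 \<le> n"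
  shows "colouring_invariant (Suc n)"
  unfolding colouring_invariant_def
proof (intro conjI allI impI)
  show "conflict_free (S3 (Suc n)) sierpinski_colouring"
    using inv n by (rule conflict_free_S3_Suc)
next
  fix x y
  assume "S3 (Suc n) x y"
  then show "sierpinski_colouring x y \<in> {1..5}"
  proof (cases rule: S3_SucE)
    case (copy i u v)
    then have "sierpinski_colouring u v \<in> {1..5}"
      using inv unfolding colouring_invariant_def by blast
    then show ?thesis
      unfolding copy(1,2) sierpinski_colouring_copy[OF copy(4) n] by (rule copy_perm_range[OF copy(3)])
  next
    case (bridge i j)
    then show ?thesis
      using n by (simp add: sierpinski_colouring_bridge K3_adj_def bridge_colour_def)
  qed
next
  fix j v
  assume "S3 (Suc n) (replicate (Suc n) j) v"
  then obtain v' where v: "v = j # v'" "j \<in> {0, 1, 2}" "S3 n (replicate n j) v'"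
    using n by (elim S3_Suc_replicateE) auto
  then have "sierpinski_colouring (replicate n j) v' \<in> extreme_edge_colours j"
    using inv unfolding colouring_invariant_def by blast
  then show "sierpinski_colouring (replicate (Suc n) j) v \<in> extreme_edge_colours j"
    unfolding replicate_Suc v(1) sierpinski_colouring_copy[OF v(3) n]
    by (rule copy_perm_extreme_edge_colours[OF v(2)])
next
  fix j v w
  assume jvw: "S3 (Suc n) (replicate (Suc n) j) v \<and> S3 (Suc n) v w \<and> w \<noteq> replicate (Suc n) j"
  then obtain v' where v: "v = j # v'" "j \<in> {0, 1, 2}" "S3 n (replicate n j) v'"
    using n by (elim conjE S3_Suc_replicateE) auto
  from jvw have "S3 (Suc n) v w"
    by blast
  then show "sierpinski_colouring v w \<in> second_edge_colours j"
  proof (cases rule: S3_SucE)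
    case (copy i v'' w')
    then have w: "S3 n v' w'" "w' \<noteq> replicate n j" "w = j # w'"
      using v jvw by auto
    then have "sierpinski_colouring v' w' \<in> second_edge_colours j"
      using inv v(3) unfolding colouring_invariant_def by blast
    then show ?thesis
      unfolding v(1) w(3) sierpinski_colouring_copy[OF w(1) n]
      by (rule copy_perm_second_edge_colours[OF v(2)])
  next
    case (bridge i k)
    then show ?thesis
      using v not_S3_replicate_replicate[OF n] by auto
  qed
qed

lemma replicate_2: "replicate 2 x = [x, x]"
  by (simp add: numeral_2_eq_2)

lemma S3_2_extreme_edge:
  "S3 2 [j, j] v \<Longrightarrow> (j, v) \<in> {(0, [0,1]), (0, [0,2]), (1, [1,0]), (1, [1,2]), (2, [2,0]), (2, [2,1])}"
  unfolding S3_2_eq edge_graph_def by (auto simp: S3_2_edges_def)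

lemma colouring_invariant_2: "colouring_invariant 2"
  unfolding colouring_invariant_def replicate_2
proof (intro conjI allI impI)
  show "conflict_free (S3 2) sierpinski_colouring"
    unfolding S3_2_eq by (rule conflict_free_edge_graphI[OF _ sierpinski_colouring_sym]) code_simp
next
  fix x y
  assume "S3 2 x y"
  then show "sierpinski_colouring x y \<in> {1..5}"
    unfolding S3_2_eq edge_graph_def by (auto simp: S3_2_edges_def level_two_perm_def bridge_colour_def)
next
  fix j v
  assume "S3 2 [j, j] v"
  then have "(j, v) \<in> {(0, [0,1]), (0, [0,2]), (1, [1,0]), (1, [1,2]), (2, [2,0]), (2, [2,1])}"
    by (rule S3_2_extreme_edge)
  then show "sierpinski_colouring [j, j] v \<in> extreme_edge_colours j"
    by (auto simp: level_two_perm_def extreme_edge_colours_def)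
next
  fix j v w
  assume jvw: "S3 2 [j, j] v \<and> S3 2 v w \<and> w \<noteq> [j, j]"
  then have "(j, v) \<in> {(0, [0,1]), (0, [0,2]), (1, [1,0]), (1, [1,2]), (2, [2,0]), (2, [2,1])}"
    by (intro S3_2_extreme_edge) blast
  moreover have "edge_graph S3_2_edges v w"
    using jvw unfolding S3_2_eq by blast
  ultimately show "sierpinski_colouring v w \<in> second_edge_colours j"
    using jvw by (elim insertE emptyE)
      (auto simp: edge_graph_def S3_2_edges_def level_two_perm_def bridge_colour_def second_edge_colours_def)
qed

lemma colouring_invariant: "2 \<le> n \<Longrightarrow> colouring_invariant n"
proof (induction n rule: dec_induct)
  case base
  show ?case
    by (rule colouring_invariant_2)
next
  case (step n)
  then show ?case
    by (intro colouring_invariant_Suc)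
qed

section \<open>Upper bounds\<close>

lemma inj_edge_coloring_S3_1: "inj_edge_coloring (S3 1) 3 (edge_colouring sierpinski_colouring)"
proof (rule inj_edge_coloring_edge_colouring)
  show "conflict_free (S3 1) sierpinski_colouring"
    unfolding S3_1_eq by (rule conflict_free_edge_graphI[OF _ sierpinski_colouring_sym]) code_simp
  show "sierpinski_colouring x y \<in> {1..3}" if "S3 1 x y" for x y
    using that unfolding S3_1_eq edge_graph_def by (auto simp: S3_1_edges_def)
qed (rule sierpinski_colouring_sym)

definition S3_2_colouring :: "nat list \<Rightarrow> nat list \<Rightarrow> nat" where
  "S3_2_colouring x y =
     (if hd x = hd y then [[1,2,3], [2,4,3], [1,4,2]] ! hd x ! (hd (tl x) + hd (tl y) - 1)
      else [1,4,3] ! (hd x + hd y - 1))"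

lemma inj_edge_coloring_S3_2: "inj_edge_coloring (S3 2) 4 (edge_colouring S3_2_colouring)"
proof (rule inj_edge_coloring_edge_colouring)
  show sym: "S3_2_colouring x y = S3_2_colouring y x" for x y
    by (simp add: S3_2_colouring_def add.commute)
  show "conflict_free (S3 2) S3_2_colouring"
    unfolding S3_2_eq by (rule conflict_free_edge_graphI[OF _ sym]) code_simp
  show "S3_2_colouring x y \<in> {1..4}" if "S3 2 x y" for x y
    using that unfolding S3_2_eq edge_graph_def by (auto simp: S3_2_edges_def S3_2_colouring_def)
qed

lemma inj_edge_coloring_S3:
  assumes "2 \<le> n"
  shows "inj_edge_coloring (S3 n) 5 (edge_colouring sierpinski_colouring)"
  using colouring_invariant[OF assms] sierpinski_colouring_sym
  unfolding colouring_invariant_def by (intro inj_edge_coloring_edge_colouring) blast+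

theorem mainTheorem5:
  shows "inj_chromatic_index (S3 1) = 3 \<and> inj_chromatic_index (S3 2) = 4 \<and>
         (\<forall>n\<ge>3. inj_chromatic_index (S3 n) = 5)"
proof (intro conjI allI impI)
  show "inj_chromatic_index (S3 1) = 3"
    using not_inj_edge_coloring_S3_1 by (intro inj_chromatic_index_eqI[OF inj_edge_coloring_S3_1]) simp
  show "inj_chromatic_index (S3 2) = 4"
    using not_inj_edge_coloring_S3_2 by (intro inj_chromatic_index_eqI[OF inj_edge_coloring_S3_2]) simp
  fix n :: nat
  assume "3 \<le> n"
  then show "inj_chromatic_index (S3 n) = 5"
    using not_inj_edge_coloring_S3[of n] inj_edge_coloring_S3[of n]
    by (intro inj_chromatic_index_eqI) simp_all
qed

end
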